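(* Let $\varepsilon>0$. Then $\mathfrak{ss}_e^\varepsilon=\mathfrak{ss}_l^{(-\varepsilon,\varepsilon)}$ and $(\mathfrak{ss}_e^{\varepsilon})^\perp=(\mathfrak{ss}_l^{(-\varepsilon,\varepsilon)})^\perp$.
   Context: Let $\mathfrak S_{cc}$ be the set of all sequences $\mathbf a=\langle a_i:i\in\omega\rangle$ of rational numbers with $a_i\to0$ such that $\sum_i a_i$ is conditionally convergent (converges to a real number, with the positive terms summing to $+\infty$ and the negative terms to $-\infty$). Let $[\omega]^\omega_\omega$ be the set of infinite coinfinite subsets of $\omega$; for such $X$ with increasing enumeration $\langle i_n\rangle$, $\sum_X\mathbf a$ denotes $\sum_n a_{i_n}$. For $A\subseteq\mathbb R$: $\mathfrak{ss}_l^A$ is the least cardinality of $\mathcal X\subseteq[\omega]^\omega_\omega$ such that every $\mathbf a\in\mathfrak S_{cc}$ has some $X\in\mathcal X$ for which $\sum_X\mathbf a$ converges to a limit in $A$; $(\mathfrak{ss}_l^A)^\perp$ is the least cardinality of $\mathcal A\subseteq\mathfrak S_{cc}$ such that no $X\in[\omega]^\omega_\omega$ has $\sum_X\mathbf a$ converging to a limit in $A$ for all $\mathbf a\in\mathcal A$. For $\varepsilon>0$, $\mathfrak{ss}_e^\varepsilon$ is the least cardinality of $\mathcal X\subseteq[\omega]^\omega_\omega$ such that every $\mathbf a\in\mathfrak S_{cc}$ has some $X\in\mathcal X$ for which $\sum_X\mathbf a$ converges to a limit in the open interval $(\sum\mathbf a-\varepsilon,\sum\mathbf a+\varepsilon)$;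 $(\mathfrak{ss}_e^{\varepsilon})^\perp$ is the least cardinality of $\mathcal A\subseteq\mathfrak S_{cc}$ such that no $X\in[\omega]^\omega_\omega$ has this property for all $\mathbf a\in\mathcal A$ simultaneously. *)

theory Defs
  imports "HOL-Analysis.Analysis" "HOL-Library.Infinite_Set"
begin

definition inf_coinf :: "nat set set" where
  "inf_coinf = {X. infinite X \<and> infinite (UNIV - X)}"

definition S_cc :: "(nat \<Rightarrow> rat) set" where
  "S_cc = {a. (\<lambda>i. real_of_rat (a i)) \<longlonglongrightarrow> 0
            \<and> summable (\<lambda>i. real_of_rat (a i))
            \<and> filterlim (\<lambda>n. \<Sum>i<n. max 0 (real_of_rat (a i))) at_top sequentially
            \<and> filterlim (\<lambda>n. \<Sum>i<n. min 0 (real_of_rat (a i))) at_bot sequentially}"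

definition sub_sums_in :: "(nat \<Rightarrow> rat) \<Rightarrow> nat set \<Rightarrow> real set \<Rightarrow> bool" where
  "sub_sums_in a X A \<longleftrightarrow> (\<exists>L\<in>A. (\<lambda>n. real_of_rat (a (enumerate X n))) sums L)"

definition eint :: "real \<Rightarrow> (nat \<Rightarrow> rat) \<Rightarrow> real set" where
  "eint \<epsilon> a = {(\<Sum>i. real_of_rat (a i)) - \<epsilon> <..< (\<Sum>i. real_of_rat (a i)) + \<epsilon>}"

definition mincard :: "('a set \<Rightarrow> bool) \<Rightarrow> 'a rel" where
  "mincard P = card_of (SOME F. P F \<and> (\<forall>G. P G \<longrightarrow> (card_of F, card_of G) \<in> ordLeq))"

definition ss_l_fam :: "real set \<Rightarrow> nat set set \<Rightarrow> bool" where
  "ss_l_fam A \<X> \<longleftrightarrow> \<X> \<subseteq> inf_coinf \<and> (\<forall>a\<in>S_cc. \<exists>X\<in>\<X>. sub_sums_in a X A)"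

definition ss_l_perp_fam :: "real set \<Rightarrow> (nat \<Rightarrow> rat) set \<Rightarrow> bool" where
  "ss_l_perp_fam A \<A> \<longleftrightarrow> \<A> \<subseteq> S_cc \<and> \<not> (\<exists>X\<in>inf_coinf. \<forall>a\<in>\<A>. sub_sums_in a X A)"

definition ss_e_fam :: "real \<Rightarrow> nat set set \<Rightarrow> bool" where
  "ss_e_fam \<epsilon> \<X> \<longleftrightarrow> \<X> \<subseteq> inf_coinf \<and> (\<forall>a\<in>S_cc. \<exists>X\<in>\<X>. sub_sums_in a X (eint \<epsilon> a))"

definition ss_e_perp_fam :: "real \<Rightarrow> (nat \<Rightarrow> rat) set \<Rightarrow> bool" where
  "ss_e_perp_fam \<epsilon> \<A> \<longleftrightarrow> \<A> \<subseteq> S_cc \<and> \<not> (\<exists>X\<in>inf_coinf. \<forall>a\<in>\<A>. sub_sums_in a X (eint \<epsilon> a))"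

definition ss_l :: "real set \<Rightarrow> nat set rel" where
  "ss_l A = mincard (ss_l_fam A)"
definition ss_l_perp :: "real set \<Rightarrow> (nat \<Rightarrow> rat) rel" where
  "ss_l_perp A = mincard (ss_l_perp_fam A)"
definition ss_e :: "real \<Rightarrow> nat set rel" where
  "ss_e \<epsilon> = mincard (ss_e_fam \<epsilon>)"
definition ss_e_perp :: "real \<Rightarrow> (nat \<Rightarrow> rat) rel" where
  "ss_e_perp \<epsilon> = mincard (ss_e_perp_fam \<epsilon>)"

end

theory Submission
  imports Defs
begin

text \<open>Complementation \<open>X \<mapsto> - X\<close> is an involution of the infinite coinfinite sets, and
  if \<open>\<Sum>a = S\<close>, then \<open>\<Sum>\<^sub>X a\<close> converges to \<open>L\<close> exactly when the sum along \<open>- X\<close> converges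
  to \<open>S - L\<close>. Since \<open>L \<in> (S - \<epsilon>, S + \<epsilon>)\<close> iff \<open>S - L \<in> (-\<epsilon>, \<epsilon>)\<close>, complementation maps the
  witness families for \<open>ss_e \<epsilon>\<close> to those for \<open>ss_l (-\<epsilon>, \<epsilon>)\<close> and back without increasing their
  size, and it shows that the families witnessing the two dual numbers are the same.\<close>

unbundle cardinal_syntax

lemma mincard_minimal:
  assumes "P F"
  obtains F0 where "mincard P = |F0|" "P F0" "\<And>G. P G \<Longrightarrow> |F0| \<le>o |G|"
proof -
  obtain r where "r \<in> card_of ` Collect P" "\<forall>r' \<in> card_of ` Collect P. r \<le>o r'"
    using exists_minim_Card_order[of "card_of ` Collect P"] assms card_of_Card_order by blast
  then have "\<exists>F0. P F0 \<and> (\<forall>G. P G \<longrightarrow> |F0| \<le>o |G| )"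
    by blast
  from someI_ex[OF this] show thesis
    by (intro that[of "SOME F0. P F0 \<and> (\<forall>G. P G \<longrightarrow> |F0| \<le>o |G| )"])
       (simp_all add: mincard_def)
qed

lemma mincard_ordIso:
  fixes P Q :: "'a set \<Rightarrow> bool"
  assumes PQ: "\<And>F. P F \<Longrightarrow> Q (f ` F)" and QP: "\<And>F. Q F \<Longrightarrow> P (g ` F)"
  shows "mincard P =o mincard Q"
proof (cases "\<exists>F. P F")
  case True
  then obtain F where "P F" by blast
  then obtain F0 where F0: "mincard P = |F0|" "P F0" "\<And>G. P G \<Longrightarrow> |F0| \<le>o |G|"
    using mincard_minimal[of P F, OF \<open>P F\<close>] by blast
  obtain G0 where G0: "mincard Q = |G0|" "Q G0" "\<And>G. Q G \<Longrightarrow> |G0| \<le>o |G|"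
    using mincard_minimal[of Q "f ` F", OF PQ[OF \<open>P F\<close>]] by blast
  have "|G0| \<le>o |F0|"
    using G0(3)[OF PQ[OF F0(2)]] card_of_image ordLeq_transitive by blast
  moreover have "|F0| \<le>o |G0|"
    using F0(3)[OF QP[OF G0(2)]] card_of_image ordLeq_transitive by blast
  ultimately show ?thesis
    unfolding F0(1) G0(1) ordIso_iff_ordLeq by blast
next
  case False
  with QP have "P = (\<lambda>_. False)" "Q = (\<lambda>_. False)"
    by blast+
  then show ?thesis
    unfolding mincard_def by (simp add: card_of_refl)
qed

lemma sums_enumerate_iff:
  fixes f :: "nat \<Rightarrow> 'a::real_normed_vector"
  assumes "infinite X"
  shows "(\<lambda>n. f (enumerate X n)) sums L \<longleftrightarrow> (\<lambda>i. if i \<in> X then f i else 0) sums L"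
proof -
  have "(\<lambda>n. (\<lambda>i. if i \<in> X then f i else 0) (enumerate X n)) sums L
        \<longleftrightarrow> (\<lambda>i. if i \<in> X then f i else 0) sums L"
    using assms by (intro sums_mono_reindex) (simp_all add: strict_mono_enumerate range_enumerate)
  then show ?thesis
    using enumerate_in_set[OF assms] by simp
qed

lemma sums_enumerate_Compl_iff:
  fixes f :: "nat \<Rightarrow> 'a::real_normed_vector"
  assumes f: "f sums S" and "infinite X" "infinite (- X)"
  shows "(\<lambda>n. f (enumerate (- X) n)) sums L \<longleftrightarrow> (\<lambda>n. f (enumerate X n)) sums (S - L)"
proof -
  let ?fX = "\<lambda>i. if i \<in> X then f i else 0"
  have split: "(\<lambda>i. if i \<in> - X then f i else 0) = (\<lambda>i. f i - ?fX i)"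
    by auto
  have "(\<lambda>i. f i - ?fX i) sums L \<longleftrightarrow> ?fX sums (S - L)"
  proof
    assume "(\<lambda>i. f i - ?fX i) sums L"
    from sums_diff[OF f this] show "?fX sums (S - L)"
      by simp
  qed (rule sums_diff[OF f, of _ "S - L", simplified])
  then show ?thesis
    unfolding sums_enumerate_iff[OF assms(2)] sums_enumerate_iff[OF assms(3)] split .
qed

lemma Compl_in_inf_coinf_iff: "- X \<in> inf_coinf \<longleftrightarrow> X \<in> inf_coinf"
  by (auto simp: inf_coinf_def Compl_eq_Diff_UNIV[symmetric])

lemma sub_sums_in_Compl_iff:
  assumes a: "a \<in> S_cc" and X: "X \<in> inf_coinf"
  shows "sub_sums_in a (- X) {-\<epsilon><..<\<epsilon>} \<longleftrightarrow> sub_sums_in a X (eint \<epsilon> a)"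
proof -
  define S where "S = (\<Sum>i. real_of_rat (a i))"
  have S: "(\<lambda>i. real_of_rat (a i)) sums S"
    using a by (simp add: S_cc_def S_def summable_sums)
  have "infinite X" "infinite (- X)"
    using X by (simp_all add: inf_coinf_def Compl_eq_Diff_UNIV)
  note Compl_sums = sums_enumerate_Compl_iff[OF S this]
  have "sub_sums_in a (- X) {-\<epsilon><..<\<epsilon>}
      \<longleftrightarrow> (\<exists>L\<in>{-\<epsilon><..<\<epsilon>}. (\<lambda>n. real_of_rat (a (enumerate X n))) sums (S - L))"
    unfolding sub_sums_in_def Compl_sums ..
  also have "\<dots> \<longleftrightarrow> (\<exists>M\<in>{S - \<epsilon><..<S + \<epsilon>}. (\<lambda>n. real_of_rat (a (enumerate X n))) sums M)"
    by (auto intro!: bexI[of _ "S - _"])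
  finally show ?thesis
    unfolding sub_sums_in_def eint_def S_def .
qed

lemma Compl_image_subset_inf_coinf_iff: "uminus ` \<X> \<subseteq> inf_coinf \<longleftrightarrow> \<X> \<subseteq> inf_coinf"
  by (auto simp: Compl_in_inf_coinf_iff image_subset_iff)

lemma ss_e_fam_iff_Compl: "ss_e_fam \<epsilon> \<X> \<longleftrightarrow> ss_l_fam {-\<epsilon><..<\<epsilon>} (uminus ` \<X>)"
proof (cases "\<X> \<subseteq> inf_coinf")
  case True
  have "(\<exists>X\<in>\<X>. sub_sums_in a X (eint \<epsilon> a))
      \<longleftrightarrow> (\<exists>Y\<in>uminus ` \<X>. sub_sums_in a Y {-\<epsilon><..<\<epsilon>})"
    if "a \<in> S_cc" for a
    using True that sub_sums_in_Compl_iff[of a] by (auto simp only: image_iff)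
  with True show ?thesis
    unfolding ss_e_fam_def ss_l_fam_def Compl_image_subset_inf_coinf_iff by simp
next
  case False
  then show ?thesis
    unfolding ss_e_fam_def ss_l_fam_def Compl_image_subset_inf_coinf_iff by simp
qed

lemma bex_inf_coinf_Compl_iff: "(\<exists>X\<in>inf_coinf. P (- X)) \<longleftrightarrow> (\<exists>X\<in>inf_coinf. P X)"
  by (metis Compl_in_inf_coinf_iff double_compl)

lemma ss_e_perp_fam_eq: "ss_e_perp_fam \<epsilon> = ss_l_perp_fam {-\<epsilon><..<\<epsilon>}"
proof
  fix \<A>
  have "(\<exists>X\<in>inf_coinf. \<forall>a\<in>\<A>. sub_sums_in a X (eint \<epsilon> a))
      \<longleftrightarrow> (\<exists>X\<in>inf_coinf. \<forall>a\<in>\<A>. sub_sums_in a (- X) {-\<epsilon><..<\<epsilon>})"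
    if "\<A> \<subseteq> S_cc"
    using that by (intro bex_cong ball_cong refl) (simp add: subsetD sub_sums_in_Compl_iff)
  also have "\<dots> \<longleftrightarrow> (\<exists>X\<in>inf_coinf. \<forall>a\<in>\<A>. sub_sums_in a X {-\<epsilon><..<\<epsilon>})"
    by (rule bex_inf_coinf_Compl_iff)
  finally show "ss_e_perp_fam \<epsilon> \<A> = ss_l_perp_fam {-\<epsilon><..<\<epsilon>} \<A>"
    unfolding ss_e_perp_fam_def ss_l_perp_fam_def by blast
qed

theorem mainTheorem10:
  fixes \<epsilon> :: real
  assumes "\<epsilon> > 0"
  shows "(ss_e \<epsilon>, ss_l {-\<epsilon><..<\<epsilon>}) \<in> ordIso
       \<and> (ss_e_perp \<epsilon>, ss_l_perp {-\<epsilon><..<\<epsilon>}) \<in> ordIso"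
proof
  show "(ss_e \<epsilon>, ss_l {-\<epsilon><..<\<epsilon>}) \<in> ordIso"
    unfolding ss_e_def ss_l_def
  proof (rule mincard_ordIso)
    show "ss_l_fam {-\<epsilon><..<\<epsilon>} (uminus ` \<X>)" if "ss_e_fam \<epsilon> \<X>" for \<X>
      using that ss_e_fam_iff_Compl by blast
    show "ss_e_fam \<epsilon> (uminus ` \<X>)" if "ss_l_fam {-\<epsilon><..<\<epsilon>} \<X>" for \<X>
      using that ss_e_fam_iff_Compl[of \<epsilon> "uminus ` \<X>"] by (simp add: image_image)
  qed
  show "(ss_e_perp \<epsilon>, ss_l_perp {-\<epsilon><..<\<epsilon>}) \<in> ordIso"
    unfolding ss_e_perp_def ss_l_perp_def ss_e_perp_fam_eq mincard_def by (rule card_of_refl)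
qed

end
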